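(* Let $J=\{j_0,\dots,j_{p-1}\}\subset\mathbf Z_p$ with $j_i\equiv i\pmod p$ for all $i$, and let $v_r$ be a basis of the one-dimensional representation $(\omega^r\otimes1)\otimes(\chi\circ\det)$ of $\mathrm B\cap\mathrm K\mathrm Z$. (1) If $r=0$: $\pi_W\Big(\begin{pmatrix}1&0\\0&p\end{pmatrix}[1,v_0]+\sum_{j\in J}\begin{pmatrix}p&j\\0&1\end{pmatrix}[1,v_0]\Big)=0$. (2) If $r\ge1$: $\pi_W\Big(\sum_{j\in J}(-j)^k\begin{pmatrix}p&j\\0&1\end{pmatrix}[1,v_r]\Big)=0$ for every $k\in\{0,\dots,r-1\}$. (3) If $r\ge1$ and $\lambda_0,\dots,\lambda_{p-1}\in k$ satisfy $\sum_{i=0}^{p-1}i^\ell\lambda_i=0$ for all $0\le\ell\le r-1$, then $$\pi_W\Big(\sum_{i=0}^{p-1}\lambda_ii^r[1,v_r]+\sum_{i=0}^{p-1}\lambda_i\begin{pmatrix}1&i\\0&1\end{pmatrix}\begin{pmatrix}1&0\\0&p^{-1}\end{pmatrix}\sum_{j\in J}(-j)^r\begin{pmatrix}p&j\\0&1\end{pmatrix}[1,v_r]\Big)=0.$$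
   Context: $p$ prime, $k$ finite extension of $\mathbf F_p$, $r\in\{0,\dots,p-1\}$, $\chi=\omega^s\mu_\lambda$ ($\lambda\in k^\times$), also viewed as characters of $\mathbf Q_p^\times$: $\omega(a)=ap^{-\mathrm{val}(a)}\bmod p$, $\mu_\lambda(a)=\lambda^{\mathrm{val}(a)}$. $\mathrm G=\mathrm{GL}_2(\mathbf Q_p)$, $\mathrm B$ upper triangular Borel, $\mathrm K=\mathrm{GL}_2(\mathbf Z_p)$, $\mathrm Z$ the centre. $\omega^r\otimes1$ is the character $\begin{pmatrix}a&b\\0&d\end{pmatrix}\mapsto\omega^r(a)$ of $\mathrm B\cap\mathrm K\mathrm Z$. For a representation $V$ of $\mathrm B\cap\mathrm K\mathrm Z$, $\mathrm{ind}_{\mathrm B\cap\mathrm K\mathrm Z}^{\mathrm B}V$ is compact induction and $[b,v]$ the function with $[b,v](g)=gb\cdot v$ if $gb\in\mathrm B\cap\mathrm K\mathrm Z$, $0$ otherwise; $\mathrm B$ acts by right translation ($b'\cdot[b,v]=[b'b,v]$). $W=\rho(r,\chi)=\mathrm{ind}(\omega_2^{r+1})\otimes\chi$, with $\mathrm{ind}(\omega_2^{r+1})$ the irreducible 2-dimensional representation of $\mathcal G_{\mathbf Q_p}$ with determinant $\omega^{r+1}$ and restriction to inertia $\omega_2^{r+1}\oplus\omega_2^{p(r+1)}$. $\mathrm D(W)$ is its étale $(\phi,\Gamma)$-module over $k(\!(X)\!)$ ($\phi(X)=(1+X)^p-1$, $\gamma(X)=(1+X)^{\chi_{\mathrm{cycl}}(\gamma)}-1$),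 with basis $e,f$: $\phi(e)=\lambda f$, $\phi(f)=-\lambda X^{-(r+1)(p-1)}e$, $\gamma(e)=\omega(\gamma)^sf_\gamma^{(r+1)/(p+1)}e$, $\gamma(f)=\omega(\gamma)^sf_\gamma^{p(r+1)/(p+1)}f$, $f_\gamma(X)=\omega(\gamma)X/\gamma(X)$. $\psi$: on $k(\!(X)\!)$, $\psi(\sum_{i=0}^{p-1}(1+X)^i\phi(a_i))=a_0$; on $\mathrm D(W)$, $\psi(\sum a_i\phi(d_i))=\sum\psi(a_i)d_i$. $\mathrm D^\sharp(W)=k[\![X]\!]e\oplus X^rk[\![X]\!]f$ (Colmez's largest $\psi$-stable lattice on which $\psi$ is surjective). $\varprojlim_\psi\mathrm D^\sharp(W)$ = sequences $(v_i)_{i\ge0}$ in $\mathrm D^\sharp(W)$ with $\psi(v_{i+1})=v_i$, with $\mathrm B$-action: $(\mathrm{diag}(x,x)\star v)_i=(\omega^r\chi^2)^{-1}(x)v_i$; $(\mathrm{diag}(1,p^j)\star v)_i=v_{i-j}$ (i.e. $\psi^{j-i}(v_0)$ if $i<j$); $(\mathrm{diag}(1,a)\star v)_i=\gamma_a^{-1}(v_i)$ for $a\in\mathbf Z_p^\times$ with $\chi_{\mathrm{cycl}}(\gamma_a)=a$; $(\begin{pmatrix}1&z\\0&1\end{pmatrix}\star v)_i=\psi^j((1+X)^{p^{i+j}z}v_{i+j})$ for $i+j\ge-\mathrm{val}(z)$. $\Omega(W)$ is its continuous $k$-dual with $(g\star\theta)(y)=\theta(g^{-1}\star y)$. $\theta\in\Omega(W)$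 is $y\mapsto\alpha_0(0)$ where $y_0=\alpha_0e+\beta_0X^rf$; it satisfies $b\star\theta=\chi(ad)\omega^r(a)\theta$ for $b=\begin{pmatrix}a&*\\0&d\end{pmatrix}\in\mathrm B\cap\mathrm K\mathrm Z$. $\pi_W:\mathrm{ind}_{\mathrm B\cap\mathrm K\mathrm Z}^{\mathrm B}(\omega^r\otimes1)\otimes(\chi\circ\det)\to\Omega(W)$ is the $\mathrm B$-equivariant map with $\pi_W([1,v_r])=\theta$. *)

theory Defs
  imports "HOL-Computational_Algebra.Formal_Laurent_Series" "HOL-Library.Product_Plus"
begin

text \<open>p-adic integers Z_p, represented by compatible residues z n in [0, p^n).\<close>
definition padic_int :: "nat \<Rightarrow> (nat \<Rightarrow> int) set" where
  "padic_int p = {z. (\<forall>n. 0 \<le> z n \<and> z n < int p ^ n) \<and> (\<forall>n. z (Suc n) mod int p ^ n = z n)}"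

definition padic_of_int :: "nat \<Rightarrow> int \<Rightarrow> (nat \<Rightarrow> int)" where
  "padic_of_int p a = (\<lambda>n. a mod int p ^ n)"

definition padic_neg :: "nat \<Rightarrow> (nat \<Rightarrow> int) \<Rightarrow> (nat \<Rightarrow> int)" where
  "padic_neg p z = (\<lambda>n. (- z n) mod int p ^ n)"

definition padic_mult_ppow :: "nat \<Rightarrow> nat \<Rightarrow> (nat \<Rightarrow> int) \<Rightarrow> (nat \<Rightarrow> int)" where
  "padic_mult_ppow p i z = (\<lambda>n. (int p ^ i * z n) mod int p ^ n)"

text \<open>(1+X)^z in k[[X]] for z in Z_p (char k = p): coefficient of X^m is binom(z,m) mod p,
  computed from z mod p^(m+1) (which exceeds m).\<close>
definition binom_pow :: "(nat \<Rightarrow> int) \<Rightarrow> 'k::field fps" where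
  "binom_pow z = Abs_fps (\<lambda>m. of_nat (nat (z (Suc m)) choose m))"

definition phi_fls :: "nat \<Rightarrow> 'k::field fls \<Rightarrow> 'k fls" where
  "phi_fls p F = fls_compose_fps F ((1 + fps_X) ^ p - 1)"

definition psi_fls :: "nat \<Rightarrow> 'k::field fls \<Rightarrow> 'k fls" where
  "psi_fls p F = (THE c. \<exists>a. F = (\<Sum>i<p. (1 + fls_X) ^ i * phi_fls p (a i)) \<and> c = a 0)"

text \<open>D(W) = k((X)) e + k((X)) f, the pair (a,b) standing for a e + b f.\<close>
type_synonym 'k Dmod = "'k fls \<times> 'k fls"

definition dsc :: "'k::field fls \<Rightarrow> 'k Dmod \<Rightarrow> 'k Dmod" where
  "dsc c v = (c * fst v, c * snd v)"

definition e_D :: "'k::field Dmod" where "e_D = (1, 0)"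
definition f_D :: "'k::field Dmod" where "f_D = (0, 1)"

definition phi_e :: "'k::field \<Rightarrow> 'k Dmod" where
  "phi_e lam = dsc (fls_const lam) f_D"
definition phi_f :: "nat \<Rightarrow> nat \<Rightarrow> 'k::field \<Rightarrow> 'k Dmod" where
  "phi_f p r lam = dsc (- fls_const lam * fls_X powi (- int ((r + 1) * (p - 1)))) e_D"

definition psi_D :: "nat \<Rightarrow> nat \<Rightarrow> 'k::field \<Rightarrow> 'k Dmod \<Rightarrow> 'k Dmod" where
  "psi_D p r lam x = (THE y. \<exists>c1 c2. x = dsc c1 (phi_e lam) + dsc c2 (phi_f p r lam)
        \<and> y = dsc (psi_fls p c1) e_D + dsc (psi_fls p c2) f_D)"

text \<open>D^sharp = k[[X]] e + X^r k[[X]] f\<close>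
definition Dsharp :: "nat \<Rightarrow> 'k::field Dmod set" where
  "Dsharp r = {(a, b). fls_subdegree a \<ge> 0 \<and> (b = 0 \<or> fls_subdegree b \<ge> int r)}"

definition projlim :: "nat \<Rightarrow> nat \<Rightarrow> 'k::field \<Rightarrow> (nat \<Rightarrow> 'k Dmod) set" where
  "projlim p r lam = {y. (\<forall>i. y i \<in> Dsharp r) \<and> (\<forall>i. psi_D p r lam (y (Suc i)) = y i)}"

text \<open>Action of generators of B on the projective limit.
  Central element diag(x,x), x = p^m u in Q_p^x (u a p-adic unit):
  omega(x) = u mod p, chi(x) = omega(x)^s lambda^m.\<close>
definition chi_Qp :: "nat \<Rightarrow> 'k::field \<Rightarrow> int \<times> (nat \<Rightarrow> int) \<Rightarrow> 'k" where
  "chi_Qp s lam x = (of_int (snd x 1)) ^ s * lam powi (fst x)"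

definition omega_Qp :: "int \<times> (nat \<Rightarrow> int) \<Rightarrow> 'k::field" where
  "omega_Qp x = of_int (snd x 1)"

definition act_center :: "nat \<Rightarrow> nat \<Rightarrow> 'k::field \<Rightarrow> int \<times> (nat \<Rightarrow> int)
    \<Rightarrow> (nat \<Rightarrow> 'k Dmod) \<Rightarrow> (nat \<Rightarrow> 'k Dmod)" where
  "act_center r s lam x y = (\<lambda>i. dsc (fls_const (inverse (omega_Qp x ^ r * (chi_Qp s lam x) ^ 2))) (y i))"

definition act_diag_ppow :: "nat \<Rightarrow> nat \<Rightarrow> 'k::field \<Rightarrow> int
    \<Rightarrow> (nat \<Rightarrow> 'k Dmod) \<Rightarrow> (nat \<Rightarrow> 'k Dmod)" where
  "act_diag_ppow p r lam j y = (\<lambda>i. if j \<le> int i then y (nat (int i - j))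
                                   else (psi_D p r lam ^^ nat (j - int i)) (y 0))"

text \<open>unipotent (1 z; 0 1) for z in Z_p (take j = 0 in the general formula)\<close>
definition act_unip :: "nat \<Rightarrow> (nat \<Rightarrow> int) \<Rightarrow> (nat \<Rightarrow> 'k::field Dmod) \<Rightarrow> (nat \<Rightarrow> 'k Dmod)" where
  "act_unip p z y = (\<lambda>i. dsc (fps_to_fls (binom_pow (padic_mult_ppow p i z))) (y i))"

definition theta :: "(nat \<Rightarrow> 'k::field Dmod) \<Rightarrow> 'k" where
  "theta y = fls_nth (fst (y 0)) 0"

text \<open>g^{-1} * y for g = (p j; 0 1): g^{-1} = p^{-1} diag(1,p) (1 -j; 0 1)\<close>
definition act_inv_pj :: "nat \<Rightarrow> nat \<Rightarrow> nat \<Rightarrow> 'k::field \<Rightarrow> (nat \<Rightarrow> int)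
    \<Rightarrow> (nat \<Rightarrow> 'k Dmod) \<Rightarrow> (nat \<Rightarrow> 'k Dmod)" where
  "act_inv_pj p r s lam j y =
     act_center r s lam (-1, padic_of_int p 1) (act_diag_ppow p r lam 1 (act_unip p (padic_neg p j) y))"

end

theory Submission
  imports Defs "HOL-Computational_Algebra.Primes"
begin

(* Everything reduces to explicit coefficient formulas in k((X)), char k = p.
   (1) Frobenius: phi(F) = F(X^p), since (1+X)^p - 1 = X^p; hence the coefficient of X^n of
       phi(F) is F_(n/p) or 0.  Every F decomposes as F = sum_{l<p} (1+X)^l phi(a_l), and the
       a_0-coefficients can be read off by an alternating digit sum, which gives the explicit
       formula  psi(F)_n = sum_{m<p} (-1)^m F_(pn+m).  From it we get an explicit psi on D(W).
   (2) For y in the projective limit with y_0 = (a, h), theta((p j;0 1)^-1 y) only depends on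
       h and on i = j mod p:  it is lam * kappa_i(h), kappa_i(h) = sum_b C(b,i) (-1)^(b-i) h_b.
       The moments  sum_i (-i)^m kappa_i(h)  are computed by the finite-difference identity
       sum_j (-1)^j C(b,j) j^m = 0 (m < b), (-1)^b b! (m = b):  they equal (-1)^m m! h_m
       whenever h vanishes below degree m.
   (3) In D^sharp the f-component h vanishes below degree r, and psi_D produces second
       components of the form psi(c X^((r+1)(p-1)) G), whose coefficients below r vanish and
       whose r-th coefficient is an explicit alternating sum of coefficients of G.
   The three parts of the theorem are moment computations with m = 0, m < r and m = r; part (3)
   additionally uses that the coefficients of (1+X)^(-i) are polynomials in i, so that the
   orthogonality relations on the lambda_i kill everything but the top coefficient. *)

unbundle fps_syntax

section \<open>Frobenius and its left inverse psi on Laurent series in characteristic p\<close>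

lemma fps_compose_X_power_nth:
  assumes "p > 0"
  shows "(G oo (fps_X::'k::field fps)^p) $ t = (if p dvd t then G $ (t div p) else 0)"
proof -
  have "(G oo fps_X^p) $ t = (\<Sum>i\<in>{0..t}. G $ i * ((fps_X^p)^i) $ t)"
    by (simp add: fps_compose_nth)
  also have "\<dots> = (\<Sum>i\<in>{0..t}. if t = p*i then G $ i else 0)"
  proof (intro sum.cong refl)
    fix i
    have "((fps_X::'k fps)^p)^i $ t = (if t = p*i then 1 else 0)"
      unfolding power_mult[symmetric] by (rule fps_X_power_nth)
    thus "G $ i * ((fps_X^p)^i) $ t = (if t = p*i then G $ i else 0)" by simp
  qed
  also have "\<dots> = (if p dvd t then G $ (t div p) else 0)"
  proof (cases "p dvd t")
    case True
    then obtain c where c: "t = p * c" by auto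
    have "(\<Sum>i\<in>{0..t}. if t = p*i then G $ i else 0) = (\<Sum>i\<in>{0..t}. if i = c then G $ i else 0)"
      by (intro sum.cong refl) (use c assms in auto)
    also have "\<dots> = G $ c" using c assms by simp
    finally show ?thesis using True c assms by simp
  qed (auto intro!: sum.neutral)
  finally show ?thesis .
qed

lemma one_plus_X_power_char:
  assumes "prime p" "CHAR('k::field) = p"
  shows "(1 + fps_X :: 'k fps)^p - 1 = fps_X^p"
proof -
  have "prime CHAR('k fps)" using assms by simp
  hence "(fps_X + 1 :: 'k fps)^p = fps_X^p + 1^p"
    by (rule freshmans_dream) (simp add: assms)
  thus ?thesis by (simp add: add.commute)
qed

lemma phi_fls_compose_X_power:
  assumes "prime p" "CHAR('k::field) = p"
  shows "phi_fls p (F :: 'k fls) = fls_compose_fps F (fps_X^p)"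
  by (simp add: phi_fls_def one_plus_X_power_char[OF assms])

lemma phi_fls_nth:
  fixes F :: "'k::field fls"
  assumes "prime p" "CHAR('k) = p"
  shows "phi_fls p F $$ n = (if int p dvd n then F $$ (n div int p) else 0)"
proof (cases "F = 0")
  case True thus ?thesis by (simp add: phi_fls_def)
next
  case False
  have p0: "p > 0" using assms prime_gt_0_nat by blast
  define s where "s = fls_subdegree F"
  define G where "G = fls_base_factor_to_fps F"
  have "phi_fls p F = fps_to_fls (G oo fps_X^p) * fps_to_fls (fps_X^p) powi s"
    by (simp add: phi_fls_compose_X_power[OF assms] fls_compose_fps_def G_def s_def)
  also have "fps_to_fls ((fps_X::'k fps)^p) powi s = fls_X_intpow (int p * s)"
    by (simp add: fps_to_fls_power power_int_power)
  also have "fps_to_fls (G oo fps_X^p) * fls_X_intpow (int p * s)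
      = fls_shift (-(int p * s)) (fps_to_fls (G oo fps_X^p))"
    by (rule fls_X_intpow_times_conv_shift(2))
  finally have eq: "phi_fls p F $$ n = fps_to_fls (G oo fps_X^p) $$ (n - int p * s)" by simp
  have Gn: "G $ k = F $$ (s + int k)" for k
    by (simp add: G_def s_def fls_base_factor_to_fps_nth add.commute)
  show ?thesis
  proof (cases "int p dvd n")
    case True
    then obtain c where c: "n = int p * c" by auto
    show ?thesis
    proof (cases "c < s")
      case True
      hence "F $$ c = 0" by (simp add: s_def fls_eq0_below_subdegree)
      moreover have "n - int p * s < 0" using True c p0 by (simp add: algebra_simps)
      ultimately show ?thesis using eq c p0 by simp
    next
      case False
      have "n - int p * s = int p * (c - s)" using c by (simp add: algebra_simps)
      hence "nat (n - int p * s) = p * nat (c - s)" by (simp add: nat_mult_distrib)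
      moreover have "n - int p * s \<ge> 0" using False c p0 by (simp add: algebra_simps)
      ultimately have "phi_fls p F $$ n = G $ nat (c - s)"
        using eq p0 by (simp add: fps_compose_X_power_nth)
      thus ?thesis using False Gn c p0 by simp
    qed
  next
    case False
    have "\<not> p dvd nat (n - int p * s)" if "n - int p * s \<ge> 0"
    proof
      assume "p dvd nat (n - int p * s)"
      hence "int p dvd (n - int p * s) + int p * s"
        using that by (intro dvd_add) (auto simp flip: int_dvd_int_iff)
      thus False using False by simp
    qed
    thus ?thesis using eq False p0 by (auto simp: fps_compose_X_power_nth)
  qed
qed

lemma phi_fls_mult:
  assumes "prime p" "CHAR('k::field) = p"
  shows "phi_fls p (F * G :: 'k fls) = phi_fls p F * phi_fls p G"
proof -
  have "p > 0" using assms prime_gt_0_nat by blast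
  thus ?thesis by (simp add: phi_fls_compose_X_power[OF assms] fls_compose_fps_mult)
qed

lemma phi_fls_one_plus_X:
  assumes "prime p" "CHAR('k::field) = p"
  shows "phi_fls p (1 + fls_X :: 'k fls) = (1 + fls_X)^p"
proof -
  have p0: "p > 0" using assms prime_gt_0_nat by blast
  have "phi_fls p (1 + fls_X :: 'k fls) = 1 + fls_X^p"
    using p0 by (simp add: phi_fls_compose_X_power[OF assms] fls_compose_fps_add fps_to_fls_power)
  also have "\<dots> = (fls_X + 1 :: 'k fls)^p"
  proof -
    have "prime CHAR('k fls)" using assms by simp
    hence "(fls_X + 1 :: 'k fls)^p = fls_X^p + 1^p"
      by (rule freshmans_dream) (simp add: assms)
    thus ?thesis by (simp add: add.commute)
  qed
  finally show ?thesis by (simp add: add.commute)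
qed

lemma phi_fls_sum:
  fixes E :: "nat \<Rightarrow> 'k::field fls"
  assumes "prime p" "CHAR('k) = p"
  shows "phi_fls p (\<Sum>m\<in>A. fls_const (c m) * E m) = (\<Sum>m\<in>A. fls_const (c m) * phi_fls p (E m))"
  by (rule fls_eqI) (simp add: phi_fls_nth[OF assms] fls_nth_sum)

lemma one_plus_X_power_mult_nth:
  fixes G :: "'k::field fls"
  shows "((1 + fls_X)^i * G) $$ k = (\<Sum>l\<le>i. of_nat (i choose l) * G $$ (k - int l))"
proof -
  have "(1 + fls_X :: 'k fls)^i = (\<Sum>l\<le>i. of_nat (i choose l) * fls_X^l * 1^(i-l))"
    using binomial_ring[of "fls_X::'k fls" 1 i] by (simp add: add.commute)
  hence "(1 + fls_X)^i * G = (\<Sum>l\<le>i. fls_const (of_nat (i choose l)) * (fls_X^l * G))"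
    by (simp add: sum_distrib_right fls_of_nat mult.assoc)
  thus ?thesis by (simp add: fls_nth_sum fls_X_power_times_conv_shift)
qed

lemma one_plus_X_power_phi_nth:
  fixes d :: "'k::field fls"
  assumes "prime p" "CHAR('k) = p" "i < p" "m < p"
  shows "((1 + fls_X)^i * phi_fls p d) $$ (int p * n + int m) = of_nat (i choose m) * d $$ n"
proof -
  have p0: "p > 0" using assms prime_gt_0_nat by blast
  have "((1 + fls_X)^i * phi_fls p d) $$ (int p * n + int m)
      = (\<Sum>l\<le>i. if l = m then of_nat (i choose m) * d $$ n else 0)"
  proof (unfold one_plus_X_power_mult_nth, intro sum.cong refl)
    fix l assume l: "l \<in> {..i}"
    show "of_nat (i choose l) * phi_fls p d $$ (int p * n + int m - int l) =
          (if l = m then of_nat (i choose m) * d $$ n else 0)"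
    proof (cases "l = m")
      case True thus ?thesis using p0 by (simp add: phi_fls_nth[OF assms(1,2)])
    next
      case False
      have "\<not> int p dvd (int p * n + (int m - int l))"
      proof
        assume "int p dvd (int p * n + (int m - int l))"
        hence "int p dvd (int m - int l)" by (simp add: dvd_add_right_iff)
        moreover have "\<bar>int m - int l\<bar> < int p" using l assms by auto
        ultimately show False using False dvd_imp_le_int[of "int m - int l" "int p"] by simp
      qed
      thus ?thesis using False by (simp add: phi_fls_nth[OF assms(1,2)] add_diff_eq)
    qed
  qed
  also have "\<dots> = of_nat (i choose m) * d $$ n"
    by (cases "m \<le> i") (auto simp: binomial_eq_0)
  finally show ?thesis .
qed

lemma digit_sum_one_plus_X_power_phi:
  fixes d :: "'k::field fls"
  assumes "prime p" "CHAR('k) = p" "i < p"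
  shows "(\<Sum>m<p. (-1)^m * ((1 + fls_X)^i * phi_fls p d) $$ (int p * n + int m))
         = (if i = 0 then d $$ n else 0)"
proof -
  have "(\<Sum>m<p. (-1)^m * ((1 + fls_X)^i * phi_fls p d) $$ (int p * n + int m))
      = (\<Sum>m<p. (-1)^m * of_nat (i choose m)) * d $$ n"
    by (simp add: one_plus_X_power_phi_nth[OF assms] sum_distrib_right mult.assoc)
  also have "(\<Sum>m<p. (-1)^m * of_nat (i choose m) :: 'k) = (\<Sum>m\<le>i. (-1)^m * of_nat (i choose m))"
    by (rule sum.mono_neutral_right) (use assms in \<open>auto simp: binomial_eq_0 not_le\<close>)
  also have "\<dots> = (if i = 0 then 1 else 0)"
    using choose_alternating_sum[of i, where 'a='k] by auto
  finally show ?thesis by simp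
qed

text \<open>The same digit sum for exponents up to 2p, using (1+X)^p = phi(1+X).\<close>
lemma digit_sum_one_plus_X_power_phi_2p:
  fixes d :: "'k::field fls"
  assumes "prime p" "CHAR('k) = p" "k < 2 * p"
  shows "(\<Sum>m<p. (-1)^m * ((1 + fls_X)^k * phi_fls p d) $$ (int p * n + int m))
         = (if k = 0 then d $$ n else if k = p then d $$ n + d $$ (n - 1) else 0)"
proof (cases "k < p")
  case True
  thus ?thesis using digit_sum_one_plus_X_power_phi[OF assms(1,2) True] by auto
next
  case False
  have p0: "p > 0" using assms prime_gt_0_nat by blast
  have "(1 + fls_X)^k * phi_fls p d = (1 + fls_X)^(k-p) * ((1 + fls_X)^p * phi_fls p d)"
    using False by (simp add: power_add[symmetric] mult.assoc[symmetric])
  also have "\<dots> = (1 + fls_X)^(k-p) * phi_fls p ((1 + fls_X) * d)"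
    by (simp add: phi_fls_mult[OF assms(1,2)] phi_fls_one_plus_X[OF assms(1,2)])
  finally have eq: "(1 + fls_X)^k * phi_fls p d = (1 + fls_X)^(k-p) * phi_fls p ((1 + fls_X) * d)" .
  have kp: "k - p < p" using assms False by simp
  have "((1 + fls_X) * d) $$ n = d $$ n + d $$ (n - 1)"
    by (simp add: distrib_right fls_X_power_times_conv_shift(1)[of 1, simplified])
  thus ?thesis
    unfolding eq using digit_sum_one_plus_X_power_phi[OF assms(1,2) kp, of "(1 + fls_X) * d" n] False p0
    by auto
qed

definition fls_section :: "nat \<Rightarrow> nat \<Rightarrow> 'k::field fls \<Rightarrow> 'k fls" where
  "fls_section p m F = Abs_fls (\<lambda>n. F $$ (int p * n + int m))"

lemma fls_section_nth:
  assumes "p > 0"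
  shows "fls_section p m F $$ n = F $$ (int p * n + int m)"
proof -
  have "\<forall>n < - \<bar>fls_subdegree F\<bar> - int m - 1. F $$ (int p * n + int m) = 0"
  proof (intro allI impI)
    fix n assume n: "n < - \<bar>fls_subdegree F\<bar> - int m - 1"
    have "int p * n \<le> 1 * n" using assms n by (intro mult_right_mono_neg) auto
    hence "int p * n + int m < fls_subdegree F" using n by linarith
    thus "F $$ (int p * n + int m) = 0" by (simp add: fls_eq0_below_subdegree)
  qed
  thus ?thesis unfolding fls_section_def by (intro nth_Abs_fls_lower_bound)
qed

lemma fls_X_power_decomp:
  fixes F :: "'k::field fls"
  assumes "prime p" "CHAR('k) = p"
  shows "F = (\<Sum>m<p. fls_X^m * phi_fls p (fls_section p m F))"
proof (rule fls_eqI)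
  fix k
  have p0: "p > 0" using assms prime_gt_0_nat by blast
  define m0 where "m0 = nat (k mod int p)"
  have m0p: "m0 < p" using p0 unfolding m0_def by (simp add: nat_less_iff)
  have km0: "int m0 = k mod int p" using p0 unfolding m0_def by simp
  have "(\<Sum>m<p. fls_X^m * phi_fls p (fls_section p m F)) $$ k
      = (\<Sum>m<p. if m = m0 then F $$ k else 0)"
  proof (intro trans[OF fls_nth_sum] sum.cong refl)
    fix m assume m: "m \<in> {..<p}"
    have "int p dvd (k - int m) \<longleftrightarrow> m = m0"
      using m km0 by (auto simp: mod_eq_dvd_iff[symmetric])
    moreover have "int p * ((k - int m) div int p) + int m = k" if "int p dvd (k - int m)"
      using that by simp
    ultimately show "(fls_X^m * phi_fls p (fls_section p m F)) $$ k = (if m = m0 then F $$ k else 0)"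
      using p0 by (auto simp: fls_X_power_times_conv_shift phi_fls_nth[OF assms] fls_section_nth)
  qed
  also have "\<dots> = F $$ k" using m0p by simp
  finally show "F $$ k = (\<Sum>m<p. fls_X^m * phi_fls p (fls_section p m F)) $$ k" by simp
qed

lemma X_power_as_one_plus_X_powers:
  assumes "m < p"
  shows "(fls_X::'k::field fls)^m
      = (\<Sum>l<p. fls_const (of_nat (m choose l) * (-1)^(m-l)) * (1 + fls_X)^l)"
proof -
  have "(fls_X::'k fls)^m = ((1 + fls_X) + (-1))^m" by simp
  also have "\<dots> = (\<Sum>l\<le>m. of_nat (m choose l) * (1 + fls_X)^l * (-1)^(m-l))"
    by (rule binomial_ring)
  also have "\<dots> = (\<Sum>l\<le>m. fls_const (of_nat (m choose l) * (-1)^(m-l)) * (1 + fls_X)^l)"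
  proof (intro sum.cong refl)
    fix l
    have "fls_const (of_nat (m choose l) * (-1)^(m-l) :: 'k)
        = fls_const (of_nat (m choose l)) * fls_const ((-1)^(m-l))"
      by simp
    also have "\<dots> = of_nat (m choose l) * (-1)^(m-l)" by (simp add: fls_of_nat fls_const_power)
    finally have "fls_const (of_nat (m choose l) * (-1)^(m-l) :: 'k) = of_nat (m choose l) * (-1)^(m-l)" .
    thus "of_nat (m choose l) * (1 + fls_X)^l * (-1)^(m-l)
        = fls_const (of_nat (m choose l) * (-1)^(m-l) :: 'k) * (1 + fls_X)^l"
      by (simp only: mult_ac)
  qed
  also have "\<dots> = (\<Sum>l<p. fls_const (of_nat (m choose l) * (-1)^(m-l)) * (1 + fls_X)^l)"
    by (rule sum.mono_neutral_left) (use assms in \<open>auto simp: binomial_eq_0 not_le\<close>)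
  finally show ?thesis .
qed

text \<open>The component of F along (1+X)^l in the decomposition over phi(k((X))).\<close>
definition phi_component :: "nat \<Rightarrow> nat \<Rightarrow> 'k::field fls \<Rightarrow> 'k fls" where
  "phi_component p l F = (\<Sum>m<p. fls_const (of_nat (m choose l) * (-1)^(m-l)) * fls_section p m F)"

lemma phi_component_nth:
  assumes "p > 0"
  shows "phi_component p l F $$ n
       = (\<Sum>m<p. of_nat (m choose l) * (-1)^(m-l) * F $$ (int p * n + int m))"
  by (simp add: phi_component_def fls_nth_sum fls_section_nth[OF assms])

lemma phi_decomp:
  fixes F :: "'k::field fls"
  assumes "prime p" "CHAR('k) = p"
  shows "F = (\<Sum>l<p. (1 + fls_X)^l * phi_fls p (phi_component p l F))"
proof -
  let ?c = "\<lambda>m l. fls_const (of_nat (m choose l) * (-1)^(m-l) :: 'k)"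
  have "F = (\<Sum>m<p. fls_X^m * phi_fls p (fls_section p m F))" by (rule fls_X_power_decomp[OF assms])
  also have "\<dots> = (\<Sum>m<p. (\<Sum>l<p. ?c m l * (1 + fls_X)^l) * phi_fls p (fls_section p m F))"
    by (intro sum.cong refl) (simp add: X_power_as_one_plus_X_powers)
  also have "\<dots> = (\<Sum>l<p. \<Sum>m<p. (1 + fls_X)^l * (?c m l * phi_fls p (fls_section p m F)))"
    by (subst sum.swap) (simp add: sum_distrib_right sum_distrib_left mult_ac)
  also have "\<dots> = (\<Sum>l<p. (1 + fls_X)^l * phi_fls p (phi_component p l F))"
    by (simp add: phi_component_def phi_fls_sum[OF assms] sum_distrib_left)
  finally show ?thesis .
qed

text \<open>Uniqueness: in any such decomposition, a_0 is given by the alternating digit sum.\<close>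
lemma phi_decomp_coeff0:
  fixes F :: "'k::field fls"
  assumes "prime p" "CHAR('k) = p" "F = (\<Sum>i<p. (1 + fls_X)^i * phi_fls p (a i))"
  shows "a 0 $$ n = (\<Sum>m<p. (-1)^m * F $$ (int p * n + int m))"
proof -
  have "(\<Sum>m<p. (-1)^m * F $$ (int p * n + int m))
     = (\<Sum>i<p. \<Sum>m<p. (-1)^m * ((1 + fls_X)^i * phi_fls p (a i)) $$ (int p * n + int m))"
    by (subst sum.swap) (simp add: assms(3) fls_nth_sum sum_distrib_left)
  also have "\<dots> = (\<Sum>i<p. if i = 0 then a i $$ n else 0)"
    by (intro sum.cong refl) (simp add: digit_sum_one_plus_X_power_phi[OF assms(1,2)])
  also have "\<dots> = a 0 $$ n" using assms prime_gt_0_nat by simp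
  finally show ?thesis by simp
qed

lemma psi_fls_nth:
  fixes F :: "'k::field fls"
  assumes "prime p" "CHAR('k) = p"
  shows "psi_fls p F $$ n = (\<Sum>m<p. (-1)^m * F $$ (int p * n + int m))"
proof -
  define a where "a = (\<lambda>l. phi_component p l F)"
  have ex: "F = (\<Sum>i<p. (1 + fls_X)^i * phi_fls p (a i))" unfolding a_def by (rule phi_decomp[OF assms])
  have "psi_fls p F = a 0"
    unfolding psi_fls_def
  proof (rule the_equality)
    fix c assume "\<exists>b. F = (\<Sum>i<p. (1 + fls_X) ^ i * phi_fls p (b i)) \<and> c = b 0"
    then obtain b where b: "F = (\<Sum>i<p. (1 + fls_X) ^ i * phi_fls p (b i))" "c = b 0" by blast
    show "c = a 0"
      by (rule fls_eqI) (simp add: b(2) phi_decomp_coeff0[OF assms b(1)] phi_decomp_coeff0[OF assms ex])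
  qed (use ex in blast)
  thus ?thesis using phi_decomp_coeff0[OF assms ex] by simp
qed

section \<open>The operator psi on D(W) and the lattice D^sharp\<close>

lemma phi_basis_coords:
  fixes lam :: "'k::field"
  assumes "lam \<noteq> 0"
  shows "(A, B) = dsc c1 (phi_e lam) + dsc c2 (phi_f p r lam) \<longleftrightarrow>
         c1 = fls_const (inverse lam) * B \<and>
         c2 = fls_const (- inverse lam) * fls_X^((r+1)*(p-1)) * A"
proof -
  define N where "N = (r+1)*(p-1)"
  define K :: "'k fls" where "K = - fls_const lam * fls_X powi (- int N)"
  define Ki :: "'k fls" where "Ki = fls_const (- inverse lam) * fls_X^N"
  have "K * Ki = fls_const (lam * inverse lam) * (fls_X powi (- int N) * fls_X^N)"
    by (simp add: K_def Ki_def mult_ac fls_const_mult_const[symmetric]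
        del: fls_const_mult_const fls_X_power_int)
  also have "fls_X powi (- int N) * fls_X^N = (1::'k fls)"
    by (simp add: power_int_minus del: fls_X_power_int)
  finally have KK: "K * Ki = 1" using assms by simp
  have "dsc c1 (phi_e lam) + dsc c2 (phi_f p r lam) = (c2 * K, c1 * fls_const lam)"
    by (simp add: phi_e_def phi_f_def dsc_def e_D_def f_D_def K_def N_def)
  moreover have "A = c2 * K \<longleftrightarrow> c2 = Ki * A"
  proof
    assume "A = c2 * K"
    hence "Ki * A = c2 * (K * Ki)" by (simp add: mult_ac)
    thus "c2 = Ki * A" using KK by simp
  next
    assume "c2 = Ki * A"
    hence "c2 * K = A * (K * Ki)" by (simp add: mult_ac)
    thus "A = c2 * K" using KK by simp
  qed
  moreover have "B = c1 * fls_const lam \<longleftrightarrow> c1 = fls_const (inverse lam) * B"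
  proof
    assume "B = c1 * fls_const lam"
    hence "fls_const (inverse lam) * B = c1 * fls_const (lam * inverse lam)" by (simp add: mult_ac)
    thus "c1 = fls_const (inverse lam) * B" using assms by simp
  next
    assume "c1 = fls_const (inverse lam) * B"
    hence "c1 * fls_const lam = B * fls_const (lam * inverse lam)" by (simp add: mult_ac)
    thus "B = c1 * fls_const lam" using assms by simp
  qed
  ultimately show ?thesis by (auto simp: Ki_def N_def)
qed

lemma psi_D_explicit:
  fixes lam :: "'k::field"
  assumes "lam \<noteq> 0"
  shows "psi_D p r lam (A, B) = (psi_fls p (fls_const (inverse lam) * B),
           psi_fls p (fls_const (- inverse lam) * fls_X^((r+1)*(p-1)) * A))"
  unfolding psi_D_def phi_basis_coords[OF assms]
  by (rule the_equality) (auto simp: dsc_def e_D_def f_D_def)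

lemma Dsharp_elem:
  assumes "v \<in> Dsharp r"
  obtains \<alpha> h :: "'k::field fps" where "v = (fps_to_fls \<alpha>, fps_to_fls h)" "\<forall>k<r. h $ k = 0"
proof -
  obtain a b where v: "v = (a, b)" "fls_subdegree a \<ge> 0" "b = 0 \<or> fls_subdegree b \<ge> int r"
    using assms by (auto simp: Dsharp_def)
  have "\<forall>k<r. fls_regpart b $ k = 0"
    using v(3) by (auto intro: fls_eq0_below_subdegree)
  moreover have "fps_to_fls (fls_regpart b) = b" using v(3) by auto
  ultimately show ?thesis using that[of "fls_regpart a" "fls_regpart b"] v by auto
qed

text \<open>(-1)^(p-1) = 1 in characteristic p (for p = 2 because -1 = 1).\<close>
lemma minus_one_power_p_minus_1:
  assumes "prime p" "CHAR('k::field) = p"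
  shows "(-1::'k)^(p-1) = 1"
proof (cases "p = 2")
  case True
  hence "CHAR('k) = 2" using assms(2) by simp
  hence m1: "(-1::'k) = 1" by (rule uminus_CHAR_2)
  have "(-1::'k)^(p-1) = 1^(p-1)" by (simp only: m1)
  thus ?thesis by (simp only: power_one)
next
  case False
  hence "odd p" using assms(1) prime_odd_nat prime_ge_2_nat[OF assms(1)] by simp
  then obtain k where "p = 2 * k + 1" by (rule oddE)
  hence "(-1::'k)^(p-1) = ((-1)^2)^k" by (simp add: power_mult)
  thus ?thesis by simp
qed

lemma shift_X_power_nth:
  "(fls_const c * fls_X^N * A) $$ k = c * A $$ (k - int N)"
proof -
  have "fls_const c * fls_X^N * A = fls_const c * (fls_X^N * A)" by (simp only: mult.assoc)
  thus ?thesis by (simp only: fls_mult_const_nth fls_X_power_times_conv_shift fls_shift_nth) simp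
qed

text \<open>This describes
  the f-component of psi_D applied to a vector whose e-component is integral.\<close>
lemma psi_X_twist:
  fixes G :: "'k::field fps" and c :: 'k
  assumes "prime p" "CHAR('k) = p" "r < p"
  shows "\<exists>h. psi_fls p (fls_const c * fls_X^((r+1)*(p-1)) * fps_to_fls G) = fps_to_fls h
           \<and> (\<forall>b<r. h $ b = 0) \<and> h $ r = c * (\<Sum>k\<le>r. (-1)^(r+k) * G $ k)"
proof -
  have p0: "p > 0" using assms prime_gt_0_nat by blast
  define H where "H = psi_fls p (fls_const c * fls_X^((r+1)*(p-1)) * fps_to_fls G)"
  define f where "f n m = (-1)^m * (c * fps_to_fls G $$ (int p * (n - int r) + int m + int r + 1 - int p))"
    for n m
  have "int ((r+1)*(p-1)) = int (r+1) * int (p-1)" by (rule of_nat_mult)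
  also have "int (p-1) = int p - 1" using p0 by simp
  finally have "int ((r+1)*(p-1)) = (int r + 1) * (int p - 1)" by simp
  hence idx: "int p * n + int m - int ((r+1)*(p-1)) = int p * (n - int r) + int m + int r + 1 - int p"
    for n m by (simp add: algebra_simps)
  have Hn: "H $$ n = (\<Sum>m<p. f n m)" for n
    unfolding H_def psi_fls_nth[OF assms(1,2)] f_def by (simp only: shift_X_power_nth idx)
  have low: "H $$ n = 0" if "n < int r" for n
  proof -
    have "int p * (n - int r) \<le> int p * (-1)" using that by (intro mult_left_mono) auto
    hence "f n m = 0" if "m < p" for m using that assms(3) by (simp add: f_def)
    thus ?thesis by (simp add: Hn)
  qed
  have "H $$ int r = (\<Sum>m\<in>{p-1-r..<p}. f (int r) m)"
    unfolding Hn by (rule sum.mono_neutral_right) (auto simp: f_def)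
  also have "\<dots> = (\<Sum>k\<in>{0..<r+1}. f (int r) (k + (p-1-r)))"
    using sum.shift_bounds_nat_ivl[of "f (int r)" 0 "p-1-r" "r+1"] assms(3) by simp
  also have "\<dots> = (\<Sum>k\<le>r. c * ((-1)^(r+k) * G $ k))"
  proof (intro sum.cong)
    fix k assume "k \<in> {..r}"
    have "(-1::'k)^(r+r) = 1" by (simp add: mult_2[symmetric] power_mult)
    hence "(-1::'k)^(p-1-r) = (-1)^(p-1-r+(r+r))" by (simp add: power_add)
    also have "p-1-r+(r+r) = (p-1)+r" using assms(3) by simp
    finally have "(-1::'k)^(k + (p-1-r)) = (-1)^(r+k)"
      using minus_one_power_p_minus_1[OF assms(1,2)] by (simp add: power_add mult_ac)
    thus "f (int r) (k + (p-1-r)) = c * ((-1)^(r+k) * G $ k)"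
      using assms(3) by (simp add: f_def of_nat_diff)
  qed (auto simp: atLeast0LessThan lessThan_Suc_atMost)
  finally have top: "H $$ int r = c * (\<Sum>k\<le>r. (-1)^(r+k) * G $ k)" by (simp add: sum_distrib_left)
  have "fps_to_fls (fls_regpart H) = H"
    using low assms(3) by (intro fls_eqI) (auto simp: not_less)
  thus ?thesis using low top unfolding H_def[symmetric]
    by (intro exI[of _ "fls_regpart H"]) auto
qed

section \<open>The binomial series (1+X)^z for p-adic z\<close>

lemma one_plus_X_power_nth: "((1 + fps_X)^n :: 'k::field fps) $ a = of_nat (n choose a)"
proof -
  have "((fps_X + 1)^n :: 'k fps) = (\<Sum>k\<le>n. of_nat (n choose k) * fps_X^k * 1^(n-k))"
    by (rule binomial_ring)
  hence "((1 + fps_X)^n :: 'k fps) $ a = (\<Sum>k\<le>n. of_nat (n choose k) * (fps_X^k) $ a)"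
    by (simp add: add.commute fps_sum_nth fps_of_nat)
  also have "\<dots> = (\<Sum>k\<le>n. if k = a then of_nat (n choose a) else 0)"
    by (intro sum.cong refl) auto
  also have "\<dots> = of_nat (n choose a)" by (auto simp: binomial_eq_0)
  finally show ?thesis .
qed

lemma one_plus_X_p_power_low_nth:
  assumes "k < p"
  shows "((1 + fps_X^p)^q :: 'k::field fps) $ k = (if k = 0 then 1 else 0)"
proof (induction q)
  case (Suc q)
  have "((1 + fps_X^p)^Suc q :: 'k fps) $ k = ((1 + fps_X^p)^q) $ k + (fps_X^p * (1 + fps_X^p)^q) $ k"
    by (simp only: power_Suc distrib_right mult_1_left fps_add_nth)
  also have "(fps_X^p * (1 + fps_X^p)^q :: 'k fps) $ k = 0"
    using assms by (simp only: fps_X_power_mult_nth if_True)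
  finally show ?case using Suc by simp
qed simp

text \<open>Below degree p, (1+X)^t only depends on t mod p, since (1+X)^p = 1 + X^p.\<close>
lemma one_plus_X_power_mod_p_nth:
  assumes "prime p" "CHAR('k::field) = p" "a < p"
  shows "((1 + fps_X)^t :: 'k fps) $ a = ((1 + fps_X)^(t mod p)) $ a"
proof -
  have "((1 + fps_X)^p :: 'k fps) = 1 + fps_X^p"
    using one_plus_X_power_char[OF assms(1,2)] by (simp add: algebra_simps)
  hence eq: "((1 + fps_X)^t :: 'k fps) = (1 + fps_X)^(t mod p) * (1 + fps_X^p)^(t div p)"
    by (metis div_mult_mod_eq add.commute power_add power_mult mult.commute)
  have "((1 + fps_X)^(t mod p) * (1 + fps_X^p)^(t div p) :: 'k fps) $ a
      = (\<Sum>j=0..a. ((1 + fps_X)^(t mod p)) $ j * ((1 + fps_X^p)^(t div p)) $ (a - j))"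
    by (rule fps_mult_nth)
  also have "\<dots> = (\<Sum>j=0..a. if j = a then ((1 + fps_X)^(t mod p)) $ a else 0)"
    by (intro sum.cong refl) (use assms in \<open>auto simp: one_plus_X_p_power_low_nth\<close>)
  finally show ?thesis by (simp add: eq)
qed

definition neg_residue :: "nat \<Rightarrow> nat \<Rightarrow> (nat \<Rightarrow> int) \<Rightarrow> bool" where
  "neg_residue p i z \<longleftrightarrow> (\<forall>n. 0 \<le> z n) \<and> (\<forall>n\<ge>1. z n mod int p = (- int i) mod int p)"

lemma binom_pow_low_nth:
  assumes "prime p" "CHAR('k::field) = p" "a < p" "i < p" "neg_residue p i z"
  shows "(binom_pow z :: 'k fps) $ a = ((1 + fps_X)^((p - i) mod p)) $ a"
proof -
  have "int (nat (z (Suc a)) mod p) = (- int i) mod int p"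
    using assms(5) by (simp add: neg_residue_def zmod_int)
  also have "\<dots> = (int p - int i) mod int p" by (simp add: mod_diff_left_eq[symmetric])
  also have "\<dots> = int ((p - i) mod p)" using assms(4) by (simp add: of_nat_diff zmod_int)
  finally have "nat (z (Suc a)) mod p = (p - i) mod p" by simp
  thus ?thesis
    using one_plus_X_power_mod_p_nth[OF assms(1-3), of "nat (z (Suc a))"]
    by (simp add: binom_pow_def one_plus_X_power_nth)
qed

lemma binom_pow_mult_low_nth:
  assumes "prime p" "CHAR('k::field) = p" "m < p" "i < p" "neg_residue p i z"
  shows "((binom_pow z :: 'k fps) * h) $ m = ((1 + fps_X)^((p - i) mod p) * h) $ m"
  unfolding fps_mult_nth
  by (intro sum.cong refl) (use assms in \<open>simp add: binom_pow_low_nth\<close>)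

lemma padic_int_mod_p:
  assumes "z \<in> padic_int p" "n \<ge> 1"
  shows "z n mod int p = z 1"
  using assms(2)
proof (induction n rule: dec_induct)
  case base
  have "0 \<le> z 1 \<and> z 1 < int p ^ 1" using assms(1) unfolding padic_int_def by blast
  thus ?case by simp
next
  case (step n)
  have "z (Suc n) mod int p = (z (Suc n) mod int p ^ n) mod int p"
    using step by (simp add: mod_mod_cancel)
  also have "z (Suc n) mod int p ^ n = z n" using assms(1) by (simp add: padic_int_def)
  finally show ?case using step by simp
qed

lemma neg_residue_padic_neg:
  assumes "prime p" "j \<in> padic_int p" "j 1 = int i"
  shows "neg_residue p i (padic_mult_ppow p 0 (padic_neg p j))"
proof -
  have p0: "p > 0" using assms prime_gt_0_nat by blast
  have "((- j n) mod int p ^ n) mod int p = (- int i) mod int p" if "n \<ge> 1" for n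
  proof -
    have "int p dvd int p ^ n" using that by (simp add: dvd_power)
    hence "((- j n) mod int p ^ n) mod int p = (- (j n mod int p)) mod int p"
      by (simp add: mod_mod_cancel mod_minus_eq)
    thus ?thesis using padic_int_mod_p[OF assms(2) that] assms(3) by simp
  qed
  thus ?thesis using p0 by (simp add: neg_residue_def padic_mult_ppow_def padic_neg_def)
qed

lemma neg_residue_padic_of_int:
  assumes "prime p"
  shows "neg_residue p i (padic_mult_ppow p 0 (padic_of_int p (- int i)))"
proof -
  have "p > 0" using assms prime_gt_0_nat by blast
  moreover have "((- int i) mod int p ^ n) mod int p = (- int i) mod int p" if "n \<ge> 1" for n
    using that by (simp add: mod_mod_cancel dvd_power)
  ultimately show ?thesis by (simp add: neg_residue_def padic_mult_ppow_def padic_of_int_def)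
qed

section \<open>theta after translation by (p j; 0 1)^-1\<close>

text \<open>The linear form on k[[X]] computing theta((p j;0 1)^-1 y) from the f-component h of y_0,
  for j = i mod p.\<close>
definition kappa :: "nat \<Rightarrow> nat \<Rightarrow> 'k::comm_ring_1 fps \<Rightarrow> 'k" where
  "kappa p i h = (\<Sum>b<p. of_nat (b choose i) * (-1)^(b-i) * h $ b)"

lemma psi_coeff0_translate:
  fixes h :: "'k::field fps"
  assumes "prime p" "CHAR('k) = p" "i < p"
  shows "(\<Sum>m<p. (-1)^m * ((1 + fls_X)^((p - i) mod p) * fps_to_fls h) $$ int m) = kappa p i h"
proof -
  have p0: "p > 0" using assms prime_gt_0_nat by blast
  define u where "u = (p - i) mod p"
  define a where "a = (\<lambda>l. phi_component p l (fps_to_fls h))"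
  have "(\<Sum>m<p. (-1)^m * ((1 + fls_X)^u * fps_to_fls h) $$ int m)
      = (\<Sum>l<p. \<Sum>m<p. (-1)^m * ((1 + fls_X)^(u + l) * phi_fls p (a l)) $$ (int p * 0 + int m))"
    by (subst phi_decomp[OF assms(1,2), of "fps_to_fls h"], subst sum.swap)
       (simp add: a_def sum_distrib_left fls_nth_sum power_add mult.assoc)
  also have "\<dots> = (\<Sum>l<p. if l = i then a l $$ 0 else 0)"
  proof (intro sum.cong refl)
    fix l assume l: "l \<in> {..<p}"
    have "u < p" using p0 by (simp add: u_def)
    hence "u + l < 2 * p" using l by simp
    note digit_sum = digit_sum_one_plus_X_power_phi_2p[OF assms(1,2) this, of "a l" 0]
    have below: "a l $$ (0 - 1) = 0" using p0 by (simp add: a_def phi_component_nth)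
    have "u = (if i = 0 then 0 else p - i)" using assms(3) by (simp add: u_def)
    hence "u + l = 0 \<longleftrightarrow> i = 0 \<and> l = 0" "u + l = p \<longleftrightarrow> i \<noteq> 0 \<and> l = i"
      using l assms(3) by auto
    thus "(\<Sum>m<p. (-1)^m * ((1 + fls_X)^(u + l) * phi_fls p (a l)) $$ (int p * 0 + int m))
          = (if l = i then a l $$ 0 else 0)"
      using digit_sum below by auto
  qed
  also have "\<dots> = kappa p i h"
    using assms p0 by (simp add: a_def phi_component_nth kappa_def)
  finally show ?thesis by (simp add: u_def)
qed

text \<open>The central element diag(p^-1, p^-1) acts by lam^2.\<close>
lemma act_center_inv_p:
  assumes "prime p" "lam \<noteq> (0::'k::field)"
  shows "act_center r s lam (-1, padic_of_int p 1) V i = dsc (fls_const (lam^2)) (V i)"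
proof -
  have "int p > 1" using assms prime_gt_1_nat by auto
  hence "omega_Qp ((-1::int), padic_of_int p 1) = (1::'k)"
        "chi_Qp s lam ((-1::int), padic_of_int p 1) = inverse lam"
    by (simp_all add: padic_of_int_def omega_Qp_def chi_Qp_def power_int_minus)
  thus ?thesis using assms by (simp add: act_center_def power_inverse)
qed

lemma theta_translate:
  fixes lam :: "'k::field" and h :: "'k fps"
  assumes "prime p" "CHAR('k) = p" "lam \<noteq> 0" "i < p"
    and "neg_residue p i (padic_mult_ppow p 0 z)"
    and "snd (y 0) = fps_to_fls h"
  shows "theta (act_center r s lam (-1, padic_of_int p 1) (act_diag_ppow p r lam 1 (act_unip p z y)))
       = lam * kappa p i h"
proof -
  define B :: "'k fps" where "B = binom_pow (padic_mult_ppow p 0 z)"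
  define P :: "'k fps" where "P = (1 + fps_X)^((p - i) mod p)"
  have "theta (act_center r s lam (-1, padic_of_int p 1) (act_diag_ppow p r lam 1 (act_unip p z y)))
      = lam^2 * psi_fls p (fls_const (inverse lam) * (fps_to_fls B * fps_to_fls h)) $$ 0"
    using assms(6)
    by (simp add: theta_def act_center_inv_p[OF assms(1,3)] act_diag_ppow_def act_unip_def
        psi_D_explicit[OF assms(3)] dsc_def B_def)
  also have "\<dots> = lam^2 * (\<Sum>m<p. (-1)^m * (inverse lam * (B * h) $ m))"
    by (simp add: psi_fls_nth[OF assms(1,2)] fls_times_fps_to_fls[symmetric])
  also have "\<dots> = lam * (\<Sum>m<p. (-1)^m * (P * h) $ m)"
  proof -
    have "(\<Sum>m<p. (-1)^m * (inverse lam * (B * h) $ m)) = inverse lam * (\<Sum>m<p. (-1)^m * (P * h) $ m)"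
      unfolding sum_distrib_left
      by (intro sum.cong refl) (use assms in \<open>simp add: B_def P_def binom_pow_mult_low_nth\<close>)
    thus ?thesis using assms(3) by (simp add: power2_eq_square)
  qed
  also have "(\<Sum>m<p. (-1)^m * (P * h) $ m)
      = (\<Sum>m<p. (-1)^m * ((1 + fls_X)^((p - i) mod p) * fps_to_fls h) $$ int m)"
  proof -
    have "fps_to_fls P = (1 + fls_X :: 'k fls)^((p - i) mod p)"
      by (simp add: P_def fps_to_fls_power)
    hence "(1 + fls_X :: 'k fls)^((p - i) mod p) * fps_to_fls h = fps_to_fls (P * h)"
      by (simp add: fls_times_fps_to_fls)
    thus ?thesis by simp
  qed
  also have "\<dots> = kappa p i h" by (rule psi_coeff0_translate[OF assms(1,2,4)])
  finally show ?thesis .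
qed

lemma theta_act_inv_pj:
  fixes lam :: "'k::field" and h :: "'k fps"
  assumes "prime p" "CHAR('k) = p" "lam \<noteq> 0" "i < p"
    and "j \<in> padic_int p" "j 1 = int i"
    and "snd (y 0) = fps_to_fls h"
  shows "theta (act_inv_pj p r s lam j y) = lam * kappa p i h"
  unfolding act_inv_pj_def
  by (rule theta_translate[where z = "padic_neg p j" and y = y and h = h,
        OF assms(1-4) neg_residue_padic_neg[OF assms(1,5,6)] assms(7)])

section \<open>Moments of kappa: a finite-difference identity\<close>

text \<open>The alternating power sums sum_j (-1)^j C(b,j) j^m, i.e. b-th finite differences of j^m.\<close>
definition alt_power_sum :: "nat \<Rightarrow> nat \<Rightarrow> 'a::comm_ring_1" where
  "alt_power_sum b m = (\<Sum>j\<le>b. (-1)^j * of_nat (b choose j) * of_nat j ^ m)"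

lemma alt_power_sum_shift:
  "alt_power_sum b m = (0::'a::comm_ring_1)^m
     + (\<Sum>j\<le>b. (-1)^(Suc j) * of_nat (b choose Suc j) * of_nat (Suc j) ^ m)"
proof -
  have "alt_power_sum b m = (\<Sum>j\<le>Suc b. (-1)^j * of_nat (b choose j) * (of_nat j ::'a) ^ m)"
    unfolding alt_power_sum_def by (simp add: binomial_eq_0)
  also have "\<dots> = (0::'a)^m + (\<Sum>j\<le>b. (-1)^(Suc j) * of_nat (b choose Suc j) * of_nat (Suc j) ^ m)"
    by (subst sum.atMost_Suc_shift) simp
  finally show ?thesis .
qed

text \<open>Pascal's rule turns the sums for b+1 into binomial combinations of those for b.\<close>
lemma alt_power_sum_Suc:
  "alt_power_sum (Suc b) m = - (\<Sum>t<m. of_nat (m choose t) * (alt_power_sum b t :: 'a::comm_ring_1))"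
proof -
  have "alt_power_sum (Suc b) m = (0::'a)^m + (\<Sum>j\<le>b. (-1)^(Suc j) * of_nat (Suc b choose Suc j) * of_nat (Suc j) ^ m)"
    unfolding alt_power_sum_def by (subst sum.atMost_Suc_shift) simp
  also have "(\<Sum>j\<le>b. (-1)^(Suc j) * of_nat (Suc b choose Suc j) * (of_nat (Suc j)::'a) ^ m)
     = (\<Sum>j\<le>b. (-1)^(Suc j) * of_nat (b choose j) * of_nat (Suc j) ^ m)
       + (\<Sum>j\<le>b. (-1)^(Suc j) * of_nat (b choose Suc j) * of_nat (Suc j) ^ m)"
    by (simp add: sum.distrib[symmetric] algebra_simps)
  also have "(\<Sum>j\<le>b. (-1)^(Suc j) * of_nat (b choose j) * (of_nat (Suc j)::'a) ^ m)
      = - (\<Sum>t\<le>m. of_nat (m choose t) * alt_power_sum b t)"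
  proof -
    have "(of_nat (Suc j)::'a) ^ m = (\<Sum>t\<le>m. of_nat (m choose t) * of_nat j ^ t)" for j
      using binomial_ring[of "of_nat j :: 'a" 1 m] by (simp add: add.commute)
    hence "(\<Sum>j\<le>b. (-1)^(Suc j) * of_nat (b choose j) * (of_nat (Suc j)::'a) ^ m)
        = - (\<Sum>j\<le>b. \<Sum>t\<le>m. of_nat (m choose t) * ((-1)^j * of_nat (b choose j) * of_nat j ^ t))"
      by (simp add: sum_distrib_left sum_negf mult_ac)
    also have "\<dots> = - (\<Sum>t\<le>m. \<Sum>j\<le>b. of_nat (m choose t) * ((-1)^j * of_nat (b choose j) * of_nat j ^ t))"
      by (subst sum.swap) rule
    also have "\<dots> = - (\<Sum>t\<le>m. of_nat (m choose t) * alt_power_sum b t)"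
      by (simp add: alt_power_sum_def sum_distrib_left)
    finally show ?thesis .
  qed
  finally have "alt_power_sum (Suc b) m = alt_power_sum b m - (\<Sum>t\<le>m. of_nat (m choose t) * (alt_power_sum b t :: 'a))"
    by (simp add: alt_power_sum_shift[of b m])
  also have "\<dots> = - (\<Sum>t<m. of_nat (m choose t) * (alt_power_sum b t :: 'a))"
    by (simp add: lessThan_Suc_atMost[symmetric])
  finally show ?thesis .
qed

lemma alt_power_sum_values:
  "(\<forall>m<b. alt_power_sum b m = (0::'a::comm_ring_1)) \<and> alt_power_sum b b = ((-1)^b * of_nat (fact b) :: 'a)"
proof (induction b)
  case 0 thus ?case by (simp add: alt_power_sum_def)
next
  case (Suc b)
  have z: "alt_power_sum (Suc b) m = (0::'a)" if "m < Suc b" for m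
  proof -
    have "(\<Sum>t<m. of_nat (m choose t) * (alt_power_sum b t :: 'a)) = 0"
      using Suc.IH that by (intro sum.neutral) auto
    thus ?thesis by (simp add: alt_power_sum_Suc)
  qed
  have "(\<Sum>t<Suc b. of_nat (Suc b choose t) * (alt_power_sum b t :: 'a))
      = of_nat (Suc b choose b) * alt_power_sum b b"
    using Suc.IH by (simp add: lessThan_Suc)
  hence "alt_power_sum (Suc b) (Suc b) = - (of_nat (Suc b) * ((-1)^b * of_nat (fact b)) :: 'a)"
    using Suc.IH by (simp add: alt_power_sum_Suc del: of_nat_Suc)
  also have "\<dots> = (-1)^(Suc b) * of_nat (fact (Suc b))"
    by (simp only: fact_Suc of_nat_mult power_Suc) (simp add: algebra_simps)
  finally show ?case using z by blast
qed

lemma binomial_kernel_moment: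
  assumes "b < p"
  shows "(\<Sum>i<p. (- of_nat i)^m * (of_nat (b choose i) * (-1)^(b-i)) :: 'k::comm_ring_1)
       = (-1)^m * (-1)^b * alt_power_sum b m"
proof -
  have "(\<Sum>i<p. (- of_nat i)^m * (of_nat (b choose i) * (-1)^(b-i)) :: 'k)
      = (\<Sum>i\<le>b. (- of_nat i)^m * (of_nat (b choose i) * (-1)^(b-i)))"
    by (rule sum.mono_neutral_right) (use assms in \<open>auto simp: binomial_eq_0\<close>)
  also have "\<dots> = (\<Sum>i\<le>b. (-1)^m * (-1)^b * ((-1)^i * of_nat (b choose i) * of_nat i ^ m))"
  proof (intro sum.cong refl)
    fix i assume "i \<in> {..b}"
    hence "(-1::'k)^b = (-1)^(b-i) * (-1)^i" by (simp flip: power_add)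
    hence "(-1::'k)^(b-i) = (-1)^b * (-1)^i"
      by (metis (no_types) mult.assoc mult_1_right power_add left_minus_one_mult_self)
    moreover have "(- of_nat i :: 'k)^m = (-1)^m * of_nat i ^ m"
      by (subst power_mult_distrib[symmetric]) simp
    ultimately show "(- of_nat i)^m * (of_nat (b choose i) * (-1)^(b-i)) =
        (-1)^m * (-1)^b * ((-1)^i * of_nat (b choose i) * (of_nat i :: 'k) ^ m)"
      by (simp only: mult_ac)
  qed
  also have "\<dots> = (-1)^m * (-1)^b * alt_power_sum b m"
    by (simp only: alt_power_sum_def sum_distrib_left)
  finally show ?thesis .
qed

lemma kappa_moment:
  fixes h :: "'k::comm_ring_1 fps"
  assumes "m < p" "\<forall>b<m. h $ b = 0"
  shows "(\<Sum>i<p. (- of_nat i)^m * kappa p i h) = (-1)^m * of_nat (fact m) * h $ m"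
proof -
  let ?c = "\<lambda>b i. (- of_nat i)^m * (of_nat (b choose i) * (-1)^(b-i)) :: 'k"
  have "(\<Sum>i<p. (- of_nat i)^m * kappa p i h) = (\<Sum>i<p. \<Sum>b<p. h $ b * ?c b i)"
    by (simp add: kappa_def sum_distrib_left mult_ac)
  also have "\<dots> = (\<Sum>b<p. h $ b * ((-1)^m * (-1)^b * alt_power_sum b m))"
    by (subst sum.swap) (simp add: sum_distrib_left[symmetric] binomial_kernel_moment)
  also have "\<dots> = (\<Sum>b<p. if b = m then (-1)^m * of_nat (fact m) * h $ m else 0)"
  proof (intro sum.cong refl)
    fix b
    have "(-1::'k)^m * (-1)^m = 1" by (simp flip: power_add add: mult_2[symmetric] power_mult)
    moreover have "alt_power_sum b m = (0::'k)" if "m < b" using that alt_power_sum_values by blast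
    ultimately show "h $ b * ((-1)^m * (-1)^b * alt_power_sum b m)
        = (if b = m then (-1)^m * of_nat (fact m) * h $ m else 0)"
      using assms(2) alt_power_sum_values[of m, where 'a='k]
      by (cases b m rule: linorder_cases) (simp_all add: mult_ac)
  qed
  also have "\<dots> = (-1)^m * of_nat (fact m) * h $ m" using assms(1) by simp
  finally show ?thesis .
qed

lemma theta_moment:
  fixes lam :: "'k::field" and h :: "'k fps"
  assumes "prime p" "CHAR('k) = p" "lam \<noteq> 0" "m < p"
    and J: "\<forall>i<p. J i \<in> padic_int p \<and> J i 1 = int i"
    and "snd (y 0) = fps_to_fls h" "\<forall>b<m. h $ b = 0"
  shows "(\<Sum>i<p. (- of_int (J i 1))^m * theta (act_inv_pj p r s lam (J i) y))
       = lam * ((-1)^m * of_nat (fact m) * h $ m)"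
proof -
  have "(- of_int (J i 1))^m * theta (act_inv_pj p r s lam (J i) y) = lam * ((- of_nat i)^m * kappa p i h)"
    if "i < p" for i
    using J that theta_act_inv_pj[where j = "J i" and y = y and h = h and r = r and s = s,
        OF assms(1-3) that _ _ assms(6)] by simp
  hence "(\<Sum>i<p. (- of_int (J i 1))^m * theta (act_inv_pj p r s lam (J i) y))
      = lam * (\<Sum>i<p. (- of_nat i)^m * kappa p i h)"
    by (simp add: sum_distrib_left)
  thus ?thesis by (simp add: kappa_moment[OF assms(4,7)])
qed

section \<open>Binomial coefficients of (1+X)^(-i) as polynomials in i, and orthogonality\<close>

lemma of_nat_neg_residue:
  assumes "CHAR('k::field) = p" "i < p"
  shows "(of_nat ((p - i) mod p) :: 'k) = - of_nat i"
proof (cases "i = 0")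
  case False
  hence "(p - i) mod p = p - i" using assms by simp
  moreover have "(of_nat p :: 'k) = 0" using assms(1) by (metis of_nat_CHAR)
  ultimately show ?thesis using assms by (simp add: of_nat_diff)
qed simp

lemma fact_nonzero_char:
  assumes "prime p" "CHAR('k::field) = p" "e < p"
  shows "(of_nat (fact e) :: 'k) \<noteq> 0"
proof
  assume "(of_nat (fact e) :: 'k) = 0"
  hence "p dvd fact e" using assms(2) by (simp add: of_nat_eq_0_iff_char_dvd)
  thus False using assms prime_dvd_fact_iff[OF assms(1)] by simp
qed

lemma of_nat_choose_Suc:
  assumes "(of_nat (Suc e) :: 'k::field) \<noteq> 0"
  shows "(of_nat (u choose Suc e) :: 'k) = of_nat (u choose e) * (of_nat u - of_nat e) / of_nat (Suc e)"
proof -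
  have "(u choose Suc e) * Suc e = (u choose e) * (u - e)"
    using binomial_absorption[of e u] binomial_absorb_comp[of u e] by (simp add: mult_ac)
  hence "(of_nat (u choose Suc e) :: 'k) * of_nat (Suc e) = of_nat (u choose e) * of_nat (u - e)"
    by (simp only: of_nat_mult[symmetric])
  also have "(of_nat (u choose e) :: 'k) * of_nat (u - e) = of_nat (u choose e) * (of_nat u - of_nat e)"
    by (cases "e \<le> u") (simp_all add: of_nat_diff binomial_eq_0)
  finally show ?thesis using assms by (simp add: field_simps)
qed

lemma binomial_residue_poly:
  assumes "prime p" "CHAR('k::field) = p" "e < p"
  shows "\<exists>q :: 'k poly. degree q \<le> e \<and> coeff q e = (-1)^e / of_nat (fact e)
            \<and> (\<forall>i<p. of_nat ((p - i) mod p choose e) = poly q (of_nat i))"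
  using assms(3)
proof (induction e)
  case 0 thus ?case by (intro exI[of _ "[:1:]"]) simp
next
  case (Suc e)
  then obtain q :: "'k poly" where q: "degree q \<le> e" "coeff q e = (-1)^e / of_nat (fact e)"
      "\<forall>i<p. of_nat ((p - i) mod p choose e) = poly q (of_nat i)" by auto
  have ne: "(of_nat (Suc e) :: 'k) \<noteq> 0"
  proof
    assume "(of_nat (Suc e) :: 'k) = 0"
    hence "(of_nat (fact (Suc e)) :: 'k) = 0" by (simp only: fact_Suc of_nat_id of_nat_mult mult_zero_left)
    thus False using fact_nonzero_char[OF assms(1,2) Suc.prems] by simp
  qed
  define q' where "q' = smult (inverse (of_nat (Suc e))) (q * [:- of_nat e, -1:])"
  have "degree (q * [:- of_nat e, -1:]) \<le> Suc e"
    using degree_mult_le[of q "[:- of_nat e, -1::'k:]"] q(1) by simp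
  hence "degree q' \<le> Suc e" unfolding q'_def using degree_smult_le order_trans by blast
  moreover have "coeff q' (Suc e) = (-1)^Suc e / of_nat (fact (Suc e))"
  proof -
    have "coeff q (Suc e) = 0" using q(1) by (simp add: coeff_eq_0)
    hence "coeff (q * [:- of_nat e, -1:]) (Suc e) = - coeff q e"
      by (simp add: mult_pCons_right coeff_pCons)
    hence "coeff q' (Suc e) = inverse (of_nat (Suc e)) * (- ((-1)^e / of_nat (fact e)))"
      by (simp only: q'_def coeff_smult q(2))
    also have "\<dots> = (-1)^Suc e / of_nat (fact (Suc e))"
      by (simp add: fact_Suc of_nat_mult field_simps del: of_nat_Suc) (simp add: algebra_simps)
    finally show ?thesis .
  qed
  moreover have "of_nat ((p - i) mod p choose Suc e) = poly q' (of_nat i)" if "i < p" for i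
  proof -
    have "of_nat ((p - i) mod p choose Suc e)
        = of_nat ((p - i) mod p choose e) * (of_nat ((p - i) mod p) - of_nat e) / (of_nat (Suc e) :: 'k)"
      by (rule of_nat_choose_Suc[OF ne])
    also have "\<dots> = poly q (of_nat i) * (- of_nat e - of_nat i) / of_nat (Suc e)"
      using q(3) that by (simp add: of_nat_neg_residue[OF assms(2) that] algebra_simps)
    also have "\<dots> = poly q' (of_nat i)" by (simp add: q'_def divide_inverse algebra_simps)
    finally show ?thesis .
  qed
  ultimately show ?case by blast
qed

lemma poly_as_sum:
  fixes q :: "'k::field poly"
  assumes "degree q \<le> e"
  shows "poly q x = (\<Sum>l\<le>e. coeff q l * x^l)"
  unfolding poly_altdef
  by (rule sum.mono_neutral_left) (use assms in \<open>auto simp: coeff_eq_0\<close>)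

lemma orthogonal_poly_sum:
  fixes ls :: "nat \<Rightarrow> 'k::field" and q :: "'k poly"
  assumes "degree q \<le> e" "e \<le> r" and orth: "\<forall>l<r. (\<Sum>i<p. x i ^ l * ls i) = 0"
  shows "(\<Sum>i<p. ls i * poly q (x i)) = (if e = r then coeff q r * (\<Sum>i<p. ls i * x i ^ r) else 0)"
proof -
  have "(\<Sum>i<p. ls i * poly q (x i)) = (\<Sum>l\<le>e. coeff q l * (\<Sum>i<p. x i ^ l * ls i))"
    by (simp add: poly_as_sum[OF assms(1)] sum_distrib_left sum_distrib_right mult_ac
        sum.swap[of _ "{..<p}"])
  also have "\<dots> = (\<Sum>l\<le>e. if l = r then coeff q r * (\<Sum>i<p. ls i * x i ^ r) else 0)"
    using orth assms(2) by (intro sum.cong refl) (auto simp: mult_ac)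
  also have "\<dots> = (if e = r then coeff q r * (\<Sum>i<p. ls i * x i ^ r) else 0)"
    using assms(2) by auto
  finally show ?thesis .
qed

lemma orthogonal_binomial_sum:
  fixes ls :: "nat \<Rightarrow> 'k::field"
  assumes "prime p" "CHAR('k) = p" "e \<le> r" "r < p"
    and orth: "\<forall>l<r. (\<Sum>i<p. of_nat i ^ l * ls i) = 0"
  shows "(\<Sum>i<p. ls i * of_nat ((p - i) mod p choose e))
        = (if e = r then (-1)^r / of_nat (fact r) * (\<Sum>i<p. ls i * of_nat i ^ r) else 0)"
proof -
  obtain q :: "'k poly" where q: "degree q \<le> e" "coeff q e = (-1)^e / of_nat (fact e)"
      "\<forall>i<p. of_nat ((p - i) mod p choose e) = poly q (of_nat i)"
    using binomial_residue_poly[OF assms(1,2)] assms(3,4) by (meson le_less_trans)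
  have "(\<Sum>i<p. ls i * of_nat ((p - i) mod p choose e)) = (\<Sum>i<p. ls i * poly q (of_nat i))"
    using q(3) by simp
  thus ?thesis using orthogonal_poly_sum[OF q(1) assms(3) orth] q(2) by auto
qed

text \<open>The binomial series (1+X)^(-i), by which the unipotent element (1 -i;0 1) acts at level 0.\<close>
definition unip_series :: "nat \<Rightarrow> nat \<Rightarrow> 'k::field fps" where
  "unip_series p i = binom_pow (padic_mult_ppow p 0 (padic_of_int p (- int i)))"

lemma unip_series_nth:
  assumes "prime p" "CHAR('k::field) = p" "e < p" "i < p"
  shows "(unip_series p i :: 'k fps) $ e = of_nat ((p - i) mod p choose e)"
  unfolding unip_series_def
  by (simp add: binom_pow_low_nth[OF assms neg_residue_padic_of_int[OF assms(1)]] one_plus_X_power_nth)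

lemma orthogonal_unip_series_sum:
  fixes ls :: "nat \<Rightarrow> 'k::field" and \<alpha> :: "'k fps"
  assumes "prime p" "CHAR('k) = p" "r < p" "k \<le> r"
    and orth: "\<forall>l<r. (\<Sum>i<p. of_nat i ^ l * ls i) = 0"
  shows "(\<Sum>i<p. ls i * (unip_series p i * \<alpha>) $ k)
     = (if k = r then \<alpha> $ 0 * ((-1)^r / of_nat (fact r) * (\<Sum>i<p. ls i * of_nat i ^ r)) else 0)"
proof -
  have "(\<Sum>i<p. ls i * (unip_series p i * \<alpha>) $ k)
      = (\<Sum>i<p. \<Sum>e=0..k. \<alpha> $ (k - e) * (ls i * of_nat ((p - i) mod p choose e)))"
    unfolding fps_mult_nth sum_distrib_left
    by (intro sum.cong refl) (use assms in \<open>simp add: unip_series_nth mult_ac\<close>)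
  also have "\<dots> = (\<Sum>e=0..k. \<alpha> $ (k - e) * (\<Sum>i<p. ls i * of_nat ((p - i) mod p choose e)))"
    by (subst sum.swap) (simp add: sum_distrib_left)
  also have "\<dots> = (\<Sum>e=0..k. if e = r
        then \<alpha> $ 0 * ((-1)^r / of_nat (fact r) * (\<Sum>i<p. ls i * of_nat i ^ r)) else 0)"
    using assms(4) by (intro sum.cong refl) (auto simp: orthogonal_binomial_sum[OF assms(1,2) _ assms(3) orth])
  finally show ?thesis using assms(4) by auto
qed

text \<open>The combination of these coefficients produced by psi_X_twist.\<close>
lemma orthogonal_twisted_sum:
  fixes ls :: "nat \<Rightarrow> 'k::field" and \<alpha> :: "'k fps"
  assumes "prime p" "CHAR('k) = p" "r < p"
    and orth: "\<forall>l<r. (\<Sum>i<p. of_nat i ^ l * ls i) = 0"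
  shows "(\<Sum>i<p. ls i * (\<Sum>k\<le>r. (-1)^(r+k) * (unip_series p i * \<alpha>) $ k))
       = \<alpha> $ 0 * ((-1)^r / of_nat (fact r) * (\<Sum>i<p. ls i * of_nat i ^ r))"
proof -
  have "(\<Sum>i<p. ls i * (\<Sum>k\<le>r. (-1)^(r+k) * (unip_series p i * \<alpha>) $ k))
      = (\<Sum>i<p. \<Sum>k\<le>r. (-1)^(r+k) * (ls i * (unip_series p i * \<alpha>) $ k))"
    by (simp add: sum_distrib_left mult_ac)
  also have "\<dots> = (\<Sum>k\<le>r. (-1)^(r+k) * (\<Sum>i<p. ls i * (unip_series p i * \<alpha>) $ k))"
    by (subst sum.swap) (simp add: sum_distrib_left)
  also have "\<dots> = (-1)^(r+r) * (\<alpha> $ 0 * ((-1)^r / of_nat (fact r) * (\<Sum>i<p. ls i * of_nat i ^ r)))"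
    by (simp add: orthogonal_unip_series_sum[OF assms(1-3) _ orth] if_distrib cong: if_cong)
  finally show ?thesis by (simp add: mult_2[symmetric] power_mult)
qed

section \<open>The three statements\<close>

text \<open>Part (1), r = 0: theta(diag(1,p^-1) y) + sum_j theta((p j;0 1)^-1 y) = 0.  Both terms
  are computed from y_1 = (alpha_1, _): the first is alpha_1(0), and since y_0 = psi_D(y_1) the
  f-component h of y_0 has h(0) = -alpha_1(0)/lam.\<close>
lemma part_r_zero:
  fixes lam :: "'k::field"
  assumes "prime p" "CHAR('k) = p" "lam \<noteq> 0"
    and J: "\<forall>i<p. J i \<in> padic_int p \<and> J i 1 = int i"
    and y: "y \<in> projlim p 0 lam"
  shows "theta (act_diag_ppow p 0 lam (-1) y) + (\<Sum>i<p. theta (act_inv_pj p 0 s lam (J i) y)) = 0"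
proof -
  have p0: "p > 0" using assms prime_gt_0_nat by blast
  have "y 0 \<in> Dsharp 0" "y (Suc 0) \<in> Dsharp 0" using y by (simp_all add: projlim_def)
  then obtain \<alpha> h \<alpha>1 h1 :: "'k fps" where y0: "y 0 = (fps_to_fls \<alpha>, fps_to_fls h)"
    and y1: "y (Suc 0) = (fps_to_fls \<alpha>1, fps_to_fls h1)"
    by (metis Dsharp_elem)
  have "y 0 = psi_D p 0 lam (y (Suc 0))" using y unfolding projlim_def by simp
  hence "fps_to_fls h = psi_fls p (fls_const (- inverse lam) * fls_X^((0+1)*(p-1)) * fps_to_fls \<alpha>1)"
    by (simp add: y0 y1 psi_D_explicit[OF assms(3)])
  hence h0: "h $ 0 = - inverse lam * \<alpha>1 $ 0"
    using psi_X_twist[OF assms(1,2) p0, of "- inverse lam" \<alpha>1] by auto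
  have "theta (act_diag_ppow p 0 lam (-1) y) = \<alpha>1 $ 0"
    by (simp add: theta_def act_diag_ppow_def y1)
  moreover have "(\<Sum>i<p. theta (act_inv_pj p 0 s lam (J i) y)) = lam * h $ 0"
    using theta_moment[OF assms(1-3) p0 J, of y h 0 s] y0 by simp
  ultimately show ?thesis using h0 assms(3) by simp
qed

text \<open>Part (2): the moments of order m < r vanish, since h vanishes below degree r.\<close>
lemma part_low_moments:
  fixes lam :: "'k::field"
  assumes "prime p" "CHAR('k) = p" "lam \<noteq> 0" "r < p"
    and J: "\<forall>i<p. J i \<in> padic_int p \<and> J i 1 = int i"
    and "m < r" "y \<in> projlim p r lam"
  shows "(\<Sum>i<p. (- of_int (J i 1))^m * theta (act_inv_pj p r s lam (J i) y)) = 0"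
proof -
  have "y 0 \<in> Dsharp r" using assms(7) by (simp add: projlim_def)
  then obtain \<alpha> h :: "'k fps" where y0: "y 0 = (fps_to_fls \<alpha>, fps_to_fls h)" and h: "\<forall>k<r. h $ k = 0"
    by (rule Dsharp_elem)
  have "m < p" using assms(4,6) by simp
  thus ?thesis using theta_moment[OF assms(1-3) _ J, of m y h r s] y0 h assms(6) by simp
qed

lemma f_component_after_unip:
  fixes lam :: "'k::field"
  assumes "prime p" "CHAR('k) = p" "lam \<noteq> 0" "r < p" "y 0 = (fps_to_fls \<alpha>, B)"
  shows "\<exists>h. snd (act_diag_ppow p r lam 1 (act_unip p (padic_of_int p (- int i)) y) 0) = fps_to_fls h
           \<and> (\<forall>b<r. h $ b = 0)
           \<and> h $ r = - inverse lam * (\<Sum>k\<le>r. (-1)^(r+k) * (unip_series p i * \<alpha>) $ k)"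
proof -
  have "snd (act_diag_ppow p r lam 1 (act_unip p (padic_of_int p (- int i)) y) 0)
      = psi_fls p (fls_const (- inverse lam) * fls_X^((r+1)*(p-1)) * fps_to_fls (unip_series p i * \<alpha>))"
    by (simp add: assms(5) act_diag_ppow_def act_unip_def dsc_def unip_series_def
        psi_D_explicit[OF assms(3)] fls_times_fps_to_fls)
  thus ?thesis using psi_X_twist[OF assms(1,2,4), of "- inverse lam" "unip_series p i * \<alpha>"] by simp
qed

text \<open>With h_i the f-component of Z_i(0), Z_i = diag(1,p) (1 -i;0 1) y, the r-th moment
  over J is lam (-1)^r r! h_i(r); weighting by the orthogonal lambda_i leaves exactly
  -alpha(0) sum_i lambda_i i^r, where y_0 = (alpha, _).\<close>
lemma part_top_moment:
  fixes lam :: "'k::field" and ls :: "nat \<Rightarrow> 'k"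
  assumes "prime p" "CHAR('k) = p" "lam \<noteq> 0" "r < p"
    and J: "\<forall>i<p. J i \<in> padic_int p \<and> J i 1 = int i"
    and orth: "\<forall>l<r. (\<Sum>i<p. of_nat i ^ l * ls i) = 0"
    and y: "y \<in> projlim p r lam"
  shows "(\<Sum>i<p. ls i * of_nat i ^ r) * theta y
          + (\<Sum>i<p. ls i * (\<Sum>jj<p. (- of_int (J jj 1)) ^ r *
               theta (act_inv_pj p r s lam (J jj)
                 (act_diag_ppow p r lam 1 (act_unip p (padic_of_int p (- int i)) y))))) = 0"
proof -
  define L where "L = (\<Sum>i<p. ls i * of_nat i ^ r)"
  define Z where "Z i = act_diag_ppow p r lam 1 (act_unip p (padic_of_int p (- int i)) y)" for i
  have "y 0 \<in> Dsharp r" using y by (simp add: projlim_def)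
  then obtain \<alpha> h :: "'k fps" where y0: "y 0 = (fps_to_fls \<alpha>, fps_to_fls h)" by (rule Dsharp_elem)
  define hZ where "hZ i = fls_regpart (snd (Z i 0))" for i
  have hZ: "snd (Z i 0) = fps_to_fls (hZ i) \<and> (\<forall>b<r. hZ i $ b = 0)
      \<and> hZ i $ r = - inverse lam * (\<Sum>k\<le>r. (-1)^(r+k) * (unip_series p i * \<alpha>) $ k)" for i
    using f_component_after_unip[where y = y and i = i, OF assms(1-4) y0] by (auto simp: hZ_def Z_def)
  have inner: "(\<Sum>jj<p. (- of_int (J jj 1))^r * theta (act_inv_pj p r s lam (J jj) (Z i)))
      = lam * ((-1)^r * of_nat (fact r) * hZ i $ r)" for i
    using theta_moment[OF assms(1-4) J, of "Z i" "hZ i"] hZ by blast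
  have "(\<Sum>i<p. ls i * hZ i $ r)
      = - inverse lam * (\<Sum>i<p. ls i * (\<Sum>k\<le>r. (-1)^(r+k) * (unip_series p i * \<alpha>) $ k))"
    by (simp add: hZ sum_distrib_left mult_ac)
  also have "\<dots> = - inverse lam * (\<alpha> $ 0 * ((-1)^r / of_nat (fact r) * L))"
    by (simp only: orthogonal_twisted_sum[OF assms(1,2,4) orth] L_def)
  finally have weighted:
    "(\<Sum>i<p. ls i * hZ i $ r) = - inverse lam * (\<alpha> $ 0 * ((-1)^r / of_nat (fact r) * L))" .
  have "(\<Sum>i<p. ls i * (lam * ((-1)^r * of_nat (fact r) * hZ i $ r)))
      = lam * (-1)^r * of_nat (fact r) * (\<Sum>i<p. ls i * hZ i $ r)"
    by (simp add: sum_distrib_left mult_ac)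
  also have "\<dots> = lam * (-1)^r * of_nat (fact r) * (- inverse lam * (\<alpha> $ 0 * ((-1)^r / of_nat (fact r) * L)))"
    by (simp only: weighted)
  also have "\<dots> = - ((lam * inverse lam) * (of_nat (fact r) * inverse (of_nat (fact r)))
                      * ((-1)^r * (-1)^r) * (\<alpha> $ 0 * L))"
    by (simp add: divide_inverse algebra_simps)
  also have "\<dots> = - (\<alpha> $ 0 * L)"
    using fact_nonzero_char[OF assms(1,2,4)] assms(3)
    by (simp flip: power_add add: mult_2[symmetric] power_mult)
  finally show ?thesis
    using inner by (simp add: Z_def[symmetric] theta_def y0 L_def[symmetric] mult_ac)
qed

theorem mainTheorem8:
  fixes p r s :: nat and lam :: "'k::field" and J :: "nat \<Rightarrow> (nat \<Rightarrow> int)"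
  assumes "prime p" and "CHAR('k) = p" and "finite (UNIV :: 'k set)"
    and "r < p" and "lam \<noteq> 0"
    and "\<forall>i<p. J i \<in> padic_int p \<and> J i 1 = int i"
  shows
   "(r = 0 \<longrightarrow> (\<forall>y \<in> projlim p r lam.
        theta (act_diag_ppow p r lam (-1) y)
        + (\<Sum>i<p. theta (act_inv_pj p r s lam (J i) y)) = 0))
    \<and> (1 \<le> r \<longrightarrow> (\<forall>m<r. \<forall>y \<in> projlim p r lam.
        (\<Sum>i<p. (- of_int (J i 1)) ^ m * theta (act_inv_pj p r s lam (J i) y)) = (0::'k)))
    \<and> (1 \<le> r \<longrightarrow> (\<forall>ls :: nat \<Rightarrow> 'k. (\<forall>l<r. (\<Sum>i<p. of_nat i ^ l * ls i) = 0) \<longrightarrow>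
        (\<forall>y \<in> projlim p r lam.
          (\<Sum>i<p. ls i * of_nat i ^ r) * theta y
          + (\<Sum>i<p. ls i * (\<Sum>jj<p. (- of_int (J jj 1)) ^ r *
               theta (act_inv_pj p r s lam (J jj)
                 (act_diag_ppow p r lam 1 (act_unip p (padic_of_int p (- int i)) y))))) = 0)))"
  using part_r_zero[OF assms(1,2,5,6)] part_low_moments[OF assms(1,2,5,4,6)]
        part_top_moment[OF assms(1,2,5,4,6)]
  by blast

end
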